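(* Let $T\in SO(n)$ and suppose neither $1$ nor $-1$ is an eigenvalue of $T$. Then $T$ is real in $SO(n)$ if and only if $n\not\equiv 2\pmod 4$.
   Context: An element $g$ of a group $G$ is real in $G$ if there is $h\in G$ with $hgh^{-1}=g^{-1}$. *)

theory Defs
  imports "HOL-Analysis.Analysis"
begin

text \<open>The special orthogonal group SO(n), with n the cardinality of the index type.\<close>
definition SO :: "(real^'n^'n) set" where
  "SO = {A. orthogonal_matrix A \<and> det A = 1}"

definition mat_eigenvalue :: "real^'n^'n \<Rightarrow> real \<Rightarrow> bool" where
  "mat_eigenvalue A c \<longleftrightarrow> (\<exists>v. v \<noteq> 0 \<and> A *v v = c *\<^sub>R v)"

definition real_in :: "(real^'n^'n) set \<Rightarrow> real^'n^'n \<Rightarrow> bool" where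
  "real_in G g \<longleftrightarrow> (\<exists>h\<in>G. h ** g ** matrix_inv h = matrix_inv g)"

end

theory Submission
  imports Defs
begin

text \<open>An orthogonal \<open>T\<close> without eigenvalues \<open>\<plusminus>1\<close> has no real eigenvalue at all, so \<open>n\<close> is even
  and \<open>\<real>\<^sup>n\<close> is an orthogonal sum of \<open>T\<close>-invariant planes on each of which \<open>T\<close> is a rotation.
  Reflecting in one unit vector of each plane yields an orthogonal \<open>h\<close> with \<open>h T h\<^sup>-\<^sup>1 = T\<^sup>-\<^sup>1\<close>
  and \<open>det h = (-1)\<^bsup>n/2\<^esup>\<close>. Any two orthogonal matrices conjugating \<open>T\<close> to \<open>T\<^sup>-\<^sup>1\<close> differ by an
  orthogonal \<open>c\<close> commuting with \<open>T\<close>, and such a \<open>c\<close> has determinant 1: for a suitable real \<open>r\<close>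
  the segment from \<open>-(r I + T)\<close> to \<open>c\<close> consists of invertible matrices, and
  \<open>det (-(r I + T)) > 0\<close>. So \<open>T\<close> is real in \<open>SO(n)\<close> iff \<open>n/2\<close> is even.\<close>

\<comment> \<open>keep \<open>transpose A *v x\<close> instead of the row-vector form \<open>x v* A\<close>\<close>
declare transpose_matrix_vector [simp del]

lemma inner_matrix_vector_mult_transpose:
  "inner ((A::real^'n^'m) *v x) y = inner x (transpose A *v y)"
  by (metis dot_lmul_matrix vector_transpose_matrix)

lemma matrix_vector_mult_uminus: "(A::real^'n^'m) *v (- x) = - (A *v x)"
  by (metis matrix_vector_mult_scaleR scaleR_minus1_left)

lemma orthogonal_matrix_transpose_mult_vec:
  "orthogonal_matrix (Q::real^'n^'n) \<Longrightarrow> transpose Q *v (Q *v x) = x"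
  by (simp add: orthogonal_matrix_def matrix_vector_mul_assoc)

lemma orthogonal_matrix_mult_transpose_vec:
  "orthogonal_matrix (Q::real^'n^'n) \<Longrightarrow> Q *v (transpose Q *v x) = x"
  by (simp add: orthogonal_matrix_def matrix_vector_mul_assoc)

lemma orthogonal_matrix_inner:
  "orthogonal_matrix (Q::real^'n^'n) \<Longrightarrow> inner (Q *v x) (Q *v y) = inner x y"
  by (metis inner_matrix_vector_mult_transpose orthogonal_matrix_transpose_mult_vec)

lemma orthogonal_matrix_norm:
  "orthogonal_matrix (Q::real^'n^'n) \<Longrightarrow> norm (Q *v x) = norm x"
  by (simp add: norm_eq_sqrt_inner orthogonal_matrix_inner)

lemma matrix_inv_orthogonal:
  assumes "orthogonal_matrix (Q::real^'n^'n)"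
  shows "matrix_inv Q = transpose Q"
proof -
  have "Q ** matrix_inv Q = mat 1 \<and> matrix_inv Q ** Q = mat 1"
    unfolding matrix_inv_def by (rule someI_ex) (use assms in \<open>auto simp: orthogonal_matrix_def\<close>)
  then have "transpose Q ** (Q ** matrix_inv Q) = transpose Q"
    by simp
  then show ?thesis
    using assms by (simp add: matrix_mul_assoc orthogonal_matrix_def)
qed

lemma commute_transpose_orthogonal:
  fixes A Q :: "real^'n^'n"
  assumes Q: "orthogonal_matrix Q" and commute: "A ** Q = Q ** A"
  shows "A *v (transpose Q *v x) = transpose Q *v (A *v x)"
proof -
  have "A *v (transpose Q *v x) = transpose Q *v (Q *v (A *v (transpose Q *v x)))"
    using Q by (simp add: orthogonal_matrix_transpose_mult_vec)
  also have "Q *v (A *v (transpose Q *v x)) = A *v (Q *v (transpose Q *v x))"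
    by (simp add: matrix_vector_mul_assoc matrix_mul_assoc commute[symmetric])
  also have "\<dots> = A *v x"
    using Q by (simp add: orthogonal_matrix_mult_transpose_vec)
  finally show ?thesis .
qed

lemma det_nonzero_if_trivial_kernel:
  "(\<And>x. (M::real^'n^'n) *v x = 0 \<Longrightarrow> x = 0) \<Longrightarrow> det M \<noteq> 0"
  by (metis invertible_det_nz matrix_left_invertible_ker invertible_left_inverse)

lemma det_uminus_matrix: "det (- (M::real^'n^'n)) = (-1) ^ CARD('n) * det M"
proof -
  have "- M = mat (-1) ** M"
    by (simp add: vec_eq_iff matrix_matrix_mult_def mat_def if_distrib[where f="\<lambda>x. x * _"]
        sum.delta cong: if_cong)
  then show ?thesis
    by (simp add: det_mul det_diagonal mat_def)
qed

lemma det_pos_along_segment: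
  fixes A B :: "real^'n^'n"
  assumes nonsingular: "\<And>s. s \<in> {0..1} \<Longrightarrow> det ((1 - s) *\<^sub>R A + s *\<^sub>R B) \<noteq> 0"
    and "det A > 0"
  shows "det B > 0"
proof (rule ccontr)
  let ?d = "\<lambda>s. det ((1 - s) *\<^sub>R A + s *\<^sub>R B)"
  have "continuous_on {0..1} ?d"
    unfolding det_def by (intro continuous_intros)
  moreover assume "\<not> det B > 0"
  ultimately obtain s where "s \<in> {0..1}" "?d s = 0"
    using IVT2'[of ?d 1 0 0] \<open>det A > 0\<close> by auto
  then show False
    using nonsingular by blast
qed

lemma orthogonal_matrix_real_eigenvalue:
  fixes T :: "real^'n^'n"
  assumes "orthogonal_matrix T" "T *v v = a *\<^sub>R v" "v \<noteq> 0"
  shows "a = 1 \<or> a = -1"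
proof -
  have "norm v = \<bar>a\<bar> * norm v"
    using orthogonal_matrix_norm[OF assms(1), of v] assms(2) by simp
  then show ?thesis
    using assms(3) by auto
qed

lemma SO_odd_dim_fixed_vector:
  fixes T :: "real^'n^'n"
  assumes T: "orthogonal_matrix T" "det T = 1" and odd: "odd CARD('n)"
  obtains v where "v \<noteq> 0" "T *v v = v"
proof -
  have "T ** (mat 1 - transpose T) = T - mat 1"
    using T by (simp add: matrix_eq matrix_vector_mul_assoc[symmetric] matrix_vector_mult_diff_rdistrib
        matrix_vector_mult_diff_distrib orthogonal_matrix_mult_transpose_vec)
  moreover have "mat 1 - transpose T = transpose (- (T - mat 1))"
    by (simp add: transpose_def vec_eq_iff mat_def)
  ultimately have "det (T - mat 1) = det T * ((-1) ^ CARD('n) * det (T - mat 1))"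
    by (metis det_mul det_transpose det_uminus_matrix)
  then have "det (T - mat 1) = - det (T - mat 1)"
    using T odd by simp
  then have "det (T - mat 1) = 0"
    by simp
  then obtain v where "v \<noteq> 0" "(T - mat 1) *v v = 0"
    using det_nonzero_if_trivial_kernel by blast
  then show thesis
    using that by (simp add: matrix_vector_mult_diff_rdistrib)
qed

section \<open>Householder reflections\<close>

definition householder :: "real^'n \<Rightarrow> real^'n^'n" where
  "householder w = matrix (\<lambda>x. x - (2 * inner w x) *\<^sub>R w)"

lemma householder_apply: "householder w *v x = x - (2 * inner w x) *\<^sub>R w"
proof -
  have "linear (\<lambda>x. x - (2 * inner w x) *\<^sub>R w)"
    by (simp add: linear_iff inner_add_right algebra_simps scaleR_add_left)
  then show ?thesis
    unfolding householder_def by (metis matrix_vector_mul(2))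
qed

lemma orthogonal_matrix_householder:
  assumes "norm w = 1"
  shows "orthogonal_matrix (householder w)"
proof -
  have "inner w w = 1"
    using assms by (simp add: norm_eq_1)
  then have "orthogonal_transformation (\<lambda>x. x - (2 * inner w x) *\<^sub>R w)"
    unfolding orthogonal_transformation_def
    by (simp add: linear_iff inner_add_right scaleR_add_left inner_diff_left inner_diff_right
        inner_commute algebra_simps)
  then show ?thesis
    unfolding householder_def orthogonal_transformation_matrix by simp
qed

lemma det_householder:
  assumes w: "norm (w::real^'n) = 1"
  shows "det (householder w) = -1"
proof -
  fix k :: 'n
  obtain Q where Q: "orthogonal_matrix Q" "Q *v axis k 1 = w"
    using orthogonal_matrix_exists_basis[OF w] by blast
  define D :: "real^'n^'n" where "D = (\<chi> i j. if i = j then (if i = k then -1 else 1) else 0)"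
  have D: "D *v y = y - (2 * inner (axis k 1) y) *\<^sub>R axis k 1" for y
    unfolding inner_commute[of "axis k 1"] cart_eq_inner_axis[symmetric]
    by (simp add: vec_eq_iff D_def matrix_vector_mult_def if_distrib[where f="\<lambda>x. x * _"]
        sum.delta axis_def cong: if_cong)
  have "householder w = Q ** D ** transpose Q"
  proof (subst matrix_eq, intro allI)
    fix x
    have "inner (axis k 1) (transpose Q *v x) = inner w x"
      using inner_matrix_vector_mult_transpose[of Q "axis k 1" x] Q(2) by simp
    then show "householder w *v x = (Q ** D ** transpose Q) *v x"
      using Q by (simp add: householder_apply matrix_vector_mul_assoc[symmetric] D
          matrix_vector_mult_diff_distrib matrix_vector_mult_scaleR orthogonal_matrix_mult_transpose_vec)
  qed
  moreover have "det D = -1"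
    by (subst det_diagonal) (simp_all add: D_def prod.If_cases)
  moreover have "det Q * det Q = 1"
    using det_orthogonal_matrix[OF Q(1)] by auto
  ultimately show ?thesis
    by (simp add: det_mul)
qed

section \<open>Eigenvectors of self-adjoint maps\<close>

lemma nonpos_if_linear_le_quadratic:
  fixes a C :: real
  assumes "\<And>t. 2 * t * a \<le> t\<^sup>2 * C"
  shows "a \<le> 0"
proof (rule ccontr)
  assume "\<not> a \<le> 0"
  define t where "t = a / (\<bar>C\<bar> + 1)"
  have "a > 0" "t > 0"
    using \<open>\<not> a \<le> 0\<close> by (auto simp: t_def)
  have "2 * t * a \<le> t\<^sup>2 * C"
    by (rule assms)
  then have "2 * a \<le> t * C"
    using \<open>t > 0\<close> by (simp add: power2_eq_square mult.assoc)
  also have "\<dots> \<le> t * \<bar>C\<bar>"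
    using \<open>t > 0\<close> by (simp add: mult_left_mono)
  also have "\<dots> < a"
    using \<open>a > 0\<close> by (simp add: t_def field_simps)
  finally show False
    using \<open>a > 0\<close> by simp
qed

lemma self_adjoint_maximiser_eigenvector:
  fixes B :: "'a::euclidean_space \<Rightarrow> 'a"
  assumes B: "linear B" and self_adjoint: "\<And>x y. inner (B x) y = inner x (B y)"
    and U: "subspace U" and invariant: "\<And>x. x \<in> U \<Longrightarrow> B x \<in> U"
    and vU: "v \<in> U" and vv: "inner v v = 1"
    and max: "\<And>y. y \<in> U \<Longrightarrow> inner (B y) y \<le> inner (B v) v * inner y y"
  shows "B v = inner (B v) v *\<^sub>R v"
proof -
  define \<mu> where "\<mu> = inner (B v) v"
  define w where "w = B v - \<mu> *\<^sub>R v"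
  have wU: "w \<in> U"
    unfolding w_def using invariant[OF vU] vU U by (simp add: subspace_diff subspace_scale)
  have vw: "inner v w = 0"
    unfolding w_def by (simp add: inner_diff_right \<mu>_def vv inner_commute)
  have Bvw: "inner (B v) w = inner w w"
    using vw unfolding w_def by (simp add: inner_diff_left inner_commute)
  \<comment> \<open>moving from \<open>v\<close> towards \<open>w\<close> would increase the Rayleigh quotient to first order\<close>
  have "2 * t * inner w w \<le> t\<^sup>2 * (\<mu> * inner w w - inner (B w) w)" for t
  proof -
    have "v + t *\<^sub>R w \<in> U"
      using vU wU U by (simp add: subspace_add subspace_scale)
    moreover have "inner (B w) v = inner (B v) w"
      using self_adjoint[of w v] by (simp add: inner_commute)
    then have "inner (B (v + t *\<^sub>R w)) (v + t *\<^sub>R w) = \<mu> + 2 * t * inner w w + t\<^sup>2 * inner (B w) w"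
      by (simp add: linear_add[OF B] linear_scale[OF B] inner_add_left inner_add_right
          \<mu>_def Bvw power2_eq_square algebra_simps)
    moreover have "inner (v + t *\<^sub>R w) (v + t *\<^sub>R w) = 1 + t\<^sup>2 * inner w w"
      using vw by (simp add: inner_add_left inner_add_right vv inner_commute power2_eq_square)
    ultimately show ?thesis
      using max[of "v + t *\<^sub>R w"] by (simp add: \<mu>_def algebra_simps)
  qed
  then have "inner w w \<le> 0"
    by (rule nonpos_if_linear_le_quadratic)
  then have "w = 0"
    by (metis inner_gt_zero_iff not_le)
  then show ?thesis
    by (simp add: w_def \<mu>_def)
qed

lemma self_adjoint_eigenvector_in_invariant_subspace:
  fixes B :: "'a::euclidean_space \<Rightarrow> 'a"
  assumes B: "linear B" and self_adjoint: "\<And>x y. inner (B x) y = inner x (B y)"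
    and U: "subspace U" and invariant: "\<And>x. x \<in> U \<Longrightarrow> B x \<in> U"
    and nontrivial: "u \<in> U" "u \<noteq> 0"
  obtains v l where "v \<in> U" "norm v = 1" "B v = l *\<^sub>R v"
proof -
  let ?S = "sphere 0 1 \<inter> U"
  have compact: "compact ?S"
    using closed_subspace[OF U] by (intro compact_Int_closed compact_sphere)
  have "u /\<^sub>R norm u \<in> ?S"
    using nontrivial U by (simp add: subspace_scale)
  then have nonempty: "?S \<noteq> {}"
    by blast
  have "continuous_on ?S (\<lambda>v. inner (B v) v)"
    using B by (intro continuous_intros linear_continuous_on linear_conv_bounded_linear[THEN iffD1])
  from continuous_attains_sup[OF compact nonempty this]
  obtain v where v: "v \<in> ?S" and max: "\<And>y. y \<in> ?S \<Longrightarrow> inner (B y) y \<le> inner (B v) v"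
    by blast
  have vU: "v \<in> U" and vv: "inner v v = 1"
    using v by (auto simp: norm_eq_1)
  have "inner (B y) y \<le> inner (B v) v * inner y y" if "y \<in> U" for y
  proof (cases "y = 0")
    case True
    then show ?thesis
      using linear_0[OF B] by simp
  next
    case False
    have "inner (B (y /\<^sub>R norm y)) (y /\<^sub>R norm y) \<le> inner (B v) v"
      using that False U by (intro max) (simp add: subspace_scale)
    moreover have "inner (B (y /\<^sub>R norm y)) (y /\<^sub>R norm y) = inner (B y) y / (norm y)\<^sup>2"
      using False by (simp add: linear_scale[OF B] power2_eq_square field_simps)
    ultimately show ?thesis
      using False by (simp add: divide_le_eq power2_norm_eq_inner)
  qed
  then have "B v = inner (B v) v *\<^sub>R v"
    using self_adjoint_maximiser_eigenvector[OF B self_adjoint U invariant vU vv] by blast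
  then show thesis
    using that vU v by auto
qed

lemma orthogonal_complement_transpose_invariant:
  fixes A :: "real^'n^'n"
  assumes "\<And>p. p \<in> P \<Longrightarrow> transpose A *v p \<in> P" and "\<forall>p\<in>P. orthogonal p y"
  shows "\<forall>p\<in>P. orthogonal p (A *v y)"
proof
  fix p
  assume "p \<in> P"
  then have "orthogonal (transpose A *v p) y"
    using assms by blast
  then show "orthogonal p (A *v y)"
    using inner_matrix_vector_mult_transpose[of "transpose A" p y] by (simp add: orthogonal_def)
qed

lemma span_invariant:
  fixes A :: "real^'n^'n"
  assumes "\<And>s. s \<in> S \<Longrightarrow> A *v s \<in> span S" and "p \<in> span S"
  shows "A *v p \<in> span S"
proof -
  have "A *v p \<in> span ((*v) A ` S)"
    using assms(2) by (simp add: span_linear_image)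
  also have "\<dots> \<subseteq> span S"
    using assms(1) by (intro span_minimal) auto
  finally show ?thesis .
qed

lemma orthonormal_pair_decomposition:
  fixes v w :: "'a::euclidean_space"
  assumes U: "subspace U" and "v \<in> U" "w \<in> U"
    and "inner v v = 1" "inner w w = 1" "inner v w = 0" and "x \<in> U"
  obtains a b u where "x = a *\<^sub>R v + b *\<^sub>R w + u" "u \<in> U" "\<forall>p\<in>span {v, w}. orthogonal p u"
proof
  let ?u = "x - inner v x *\<^sub>R v - inner w x *\<^sub>R w"
  show "x = inner v x *\<^sub>R v + inner w x *\<^sub>R w + ?u"
    by simp
  show "?u \<in> U"
    using assms by (simp add: subspace_diff subspace_scale)
  have "orthogonal v ?u" "orthogonal w ?u"
    using assms by (simp_all add: orthogonal_def inner_diff_right inner_commute)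
  then show "\<forall>p\<in>span {v, w}. orthogonal p ?u"
    using orthogonal_to_span[of _ "{v, w}" ?u] by (auto simp: orthogonal_commute)
qed

lemma conjugate_to_inverse_iff:
  fixes h T :: "real^'n^'n"
  assumes h: "orthogonal_matrix h" and T: "orthogonal_matrix T"
  shows "h ** T ** matrix_inv h = matrix_inv T \<longleftrightarrow> h ** T = transpose T ** h"
proof -
  have hh: "transpose h ** h = mat 1" "h ** transpose h = mat 1"
    using h by (simp_all add: orthogonal_matrix_def)
  have "h ** T ** transpose h = transpose T \<longleftrightarrow> h ** T = transpose T ** h"
  proof
    assume "h ** T ** transpose h = transpose T"
    then have "h ** T ** transpose h ** h = transpose T ** h"
      by simp
    then show "h ** T = transpose T ** h"
      by (simp add: hh flip: matrix_mul_assoc)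
  next
    assume "h ** T = transpose T ** h"
    then show "h ** T ** transpose h = transpose T"
      by (simp add: hh flip: matrix_mul_assoc)
  qed
  then show ?thesis
    using h T by (simp add: matrix_inv_orthogonal)
qed

lemma real_in_SO_iff:
  fixes T :: "real^'n^'n"
  assumes "orthogonal_matrix T"
  shows "real_in SO T \<longleftrightarrow> (\<exists>h. orthogonal_matrix h \<and> det h = 1 \<and> h ** T = transpose T ** h)"
  using assms by (auto simp: real_in_def SO_def conjugate_to_inverse_iff)

section \<open>Orthogonal matrices commuting with \<open>T\<close>\<close>

locale orthogonal_without_real_eigenvalues =
  fixes T :: "real^'n^'n"
  assumes orthogonal_T: "orthogonal_matrix T"
    and no_real_eigenvector: "T *v v = a *\<^sub>R v \<Longrightarrow> v = 0"
begin

lemma pencil_kernel_trivial: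
  assumes "a *\<^sub>R x + b *\<^sub>R (T *v x) = 0" and "a \<noteq> 0 \<or> b \<noteq> 0"
  shows "x = 0"
proof (cases "b = 0")
  case True
  then show ?thesis
    using assms by simp
next
  case False
  have "b *\<^sub>R (T *v x) = - (a *\<^sub>R x)"
    using assms(1) by (simp add: eq_neg_iff_add_eq_0 add.commute)
  then have "T *v x = (- a / b) *\<^sub>R x"
    using False by (metis divide_inverse_commute minus_mult_right scaleR_scaleR scaleR_minus_left
        inverse_scaleR_distrib scaleR_one left_inverse)
  then show ?thesis
    by (rule no_real_eigenvector)
qed

lemma det_shift_pos: "det (a *\<^sub>R mat 1 + T) > 0"
proof (rule det_pos_along_segment)
  fix s :: real
  assume "s \<in> {0..1}"
  show "det ((1 - s) *\<^sub>R mat 1 + s *\<^sub>R (a *\<^sub>R mat 1 + T)) \<noteq> 0"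
  proof (rule det_nonzero_if_trivial_kernel)
    fix x
    assume "((1 - s) *\<^sub>R mat 1 + s *\<^sub>R (a *\<^sub>R mat 1 + T)) *v x = 0"
    then have "(1 - s + s * a) *\<^sub>R x + s *\<^sub>R (T *v x) = 0"
      by (simp add: matrix_vector_mult_add_rdistrib scaleR_matrix_vector_assoc[symmetric] algebra_simps)
    then show "x = 0"
      by (rule pencil_kernel_trivial) auto
  qed
qed simp

definition pencil_spectrum :: "real^'n^'n \<Rightarrow> (real \<times> real) set" where
  "pencil_spectrum c = {(a, b). \<exists>v. v \<noteq> 0 \<and> c *v v = a *\<^sub>R v + b *\<^sub>R (T *v v)}"

context
  fixes c :: "real^'n^'n"
  assumes orthogonal_c: "orthogonal_matrix c"
    and commute: "c ** T = T ** c"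
begin

lemma pencil_relation_transpose:
  assumes "c *v v = a *\<^sub>R v + b *\<^sub>R (T *v v)"
  shows "transpose c *v v = a *\<^sub>R v + b *\<^sub>R (transpose T *v v)"
proof -
  define M where "M x = c *v x - a *\<^sub>R x - b *\<^sub>R (T *v x)" for x
  define M' where "M' x = transpose c *v x - a *\<^sub>R x - b *\<^sub>R (transpose T *v x)" for x
  have adjoint: "inner (M x) y = inner x (M' y)" for x y
    by (simp add: M_def M'_def inner_diff_left inner_diff_right inner_matrix_vector_mult_transpose)
  have "c *v (transpose T *v x) = transpose T *v (c *v x)"
    and "T *v (transpose c *v x) = transpose c *v (T *v x)" for x
    using commute orthogonal_T orthogonal_c by (simp_all add: commute_transpose_orthogonal)
  \<comment> \<open>\<open>M\<close> is normal, hence has the same kernel as its adjoint \<open>M'\<close>\<close>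
  then have normal: "M (M' x) = M' (M x)" for x
    using orthogonal_T orthogonal_c
    by (simp add: M_def M'_def matrix_vector_mult_diff_distrib matrix_vector_mult_scaleR
        orthogonal_matrix_mult_transpose_vec orthogonal_matrix_transpose_mult_vec
        matrix_vector_mul_assoc commute orthogonal_matrix_def algebra_simps)
  have "inner (M' v) (M' v) = inner (M' (M v)) v"
    by (metis adjoint inner_commute normal)
  also have "M v = 0"
    using assms by (simp add: M_def)
  finally have "M' v = 0"
    by (simp add: M'_def)
  then show ?thesis
    unfolding M'_def by (metis diff_diff_eq eq_iff_diff_eq_0)
qed

lemma pencil_eigenvectors_orthogonal:
  assumes "(a1, b1) \<noteq> (a2, b2)"
    and v1: "c *v v1 = a1 *\<^sub>R v1 + b1 *\<^sub>R (T *v v1)"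
    and v2: "c *v v2 = a2 *\<^sub>R v2 + b2 *\<^sub>R (T *v v2)"
  shows "inner v1 v2 = 0"
proof -
  define N where "N x = (a1 - a2) *\<^sub>R x + (b1 - b2) *\<^sub>R (T *v x)" for x
  define M where "M x = c *v x - a1 *\<^sub>R x - b1 *\<^sub>R (T *v x)" for x
  have linear_N: "linear N"
    unfolding N_def by (simp add: linear_iff algebra_simps)
  have "x = 0" if "N x = 0" for x
    using that unfolding N_def by (rule pencil_kernel_trivial) (use assms(1) in auto)
  then have inj_N: "inj N"
    using linear_N by (simp add: linear_injective_0)
  then obtain u where u: "N u = v1"
    using linear_injective_imp_surjective[OF linear_N] by (metis surjD)
  \<comment> \<open>\<open>N\<close> commutes with \<open>M\<close> and is injective, so the preimage \<open>u\<close> of \<open>v1 \<in> ker M\<close> lies in \<open>ker M\<close> too\<close>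
  have "N (M u) = M (N u)"
    unfolding N_def M_def
    by (simp add: algebra_simps matrix_vector_mul_assoc commute)
  also have "\<dots> = 0"
    using u v1 by (simp add: M_def)
  finally have "M u = 0"
    using inj_N linear_0[OF linear_N] by (metis injD)
  then have u_rel: "c *v u = a1 *\<^sub>R u + b1 *\<^sub>R (T *v u)"
    by (simp add: M_def algebra_simps)
  have "a1 * inner u v2 + b1 * inner (T *v u) v2 = inner (c *v u) v2"
    by (simp add: u_rel inner_add_left)
  also have "\<dots> = inner u (transpose c *v v2)"
    by (rule inner_matrix_vector_mult_transpose)
  also have "\<dots> = a2 * inner u v2 + b2 * inner (T *v u) v2"
    by (simp add: pencil_relation_transpose[OF v2] inner_add_right inner_matrix_vector_mult_transpose)
  finally have "inner (N u) v2 = 0"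
    by (simp add: N_def inner_add_left algebra_simps)
  then show ?thesis
    using u by simp
qed

lemma finite_pencil_spectrum: "finite (pencil_spectrum c)"
proof -
  obtain f where f: "\<And>p. p \<in> pencil_spectrum c \<Longrightarrow>
      f p \<noteq> 0 \<and> c *v f p = fst p *\<^sub>R f p + snd p *\<^sub>R (T *v f p)"
  proof -
    have "\<forall>p\<in>pencil_spectrum c. \<exists>v. v \<noteq> 0 \<and> c *v v = fst p *\<^sub>R v + snd p *\<^sub>R (T *v v)"
      by (auto simp: pencil_spectrum_def)
    then show thesis
      using that by metis
  qed
  have orth: "inner (f p) (f q) = 0" if "p \<in> pencil_spectrum c" "q \<in> pencil_spectrum c" "p \<noteq> q" for p q
    using pencil_eigenvectors_orthogonal[of "fst p" "snd p" "fst q" "snd q"] f[OF that(1)] f[OF that(2)] that(3)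
    by (cases p, cases q) auto
  have "inj_on f (pencil_spectrum c)"
  proof (rule inj_onI)
    fix p q
    assume pq: "p \<in> pencil_spectrum c" "q \<in> pencil_spectrum c" "f p = f q"
    show "p = q"
    proof (rule ccontr)
      assume "p \<noteq> q"
      then have "inner (f p) (f p) = 0"
        using orth[OF pq(1,2)] pq(3) by simp
      then show False
        using f[OF pq(1)] by simp
    qed
  qed
  moreover have "independent (f ` pencil_spectrum c)"
    by (rule pairwise_orthogonal_independent)
      (use f in \<open>auto simp: pairwise_def orthogonal_def intro!: orth\<close>)
  ultimately show ?thesis
    using finiteI_independent finite_imageD by blast
qed

lemma ray_avoiding_pencil_spectrum:
  obtains r where "\<And>l y. l \<ge> 0 \<Longrightarrow> c *v y = (l * r) *\<^sub>R y + l *\<^sub>R (T *v y) \<Longrightarrow> y = 0"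
proof -
  obtain r where r: "r \<notin> (\<lambda>(a, b). a / b) ` pencil_spectrum c"
    using ex_new_if_finite[OF infinite_UNIV_char_0 finite_imageI[OF finite_pencil_spectrum]] by blast
  have "y = 0" if "c *v y = (l * r) *\<^sub>R y + l *\<^sub>R (T *v y)" "l \<ge> 0" for l y
  proof (cases "l = 0")
    case True
    then have "norm y = 0"
      using that orthogonal_matrix_norm[OF orthogonal_c, of y] by simp
    then show ?thesis
      by simp
  next
    case False
    show ?thesis
    proof (rule ccontr)
      assume "y \<noteq> 0"
      then have "(l * r, l) \<in> pencil_spectrum c"
        using that unfolding pencil_spectrum_def by blast
      then show False
        using r False by (auto simp: image_iff)
    qed
  qed
  then show thesis
    using that by blast
qed

lemma det_commuting_orthogonal:
  assumes "even CARD('n)"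
  shows "det c = 1"
proof -
  obtain r where ray: "\<And>l y. l \<ge> 0 \<Longrightarrow> c *v y = (l * r) *\<^sub>R y + l *\<^sub>R (T *v y) \<Longrightarrow> y = 0"
    using ray_avoiding_pencil_spectrum by blast
  have "det c > 0"
  proof (rule det_pos_along_segment)
    fix s :: real
    assume s: "s \<in> {0..1}"
    show "det ((1 - s) *\<^sub>R (- (r *\<^sub>R mat 1 + T)) + s *\<^sub>R c) \<noteq> 0"
    proof (rule det_nonzero_if_trivial_kernel)
      fix y
      assume "((1 - s) *\<^sub>R (- (r *\<^sub>R mat 1 + T)) + s *\<^sub>R c) *v y = 0"
      then have y: "s *\<^sub>R (c *v y) = ((1 - s) * r) *\<^sub>R y + (1 - s) *\<^sub>R (T *v y)"
        by (simp add: matrix_vector_mult_add_rdistrib scaleR_matrix_vector_assoc[symmetric] algebra_simps)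
      show "y = 0"
      proof (cases "s = 0")
        case True
        then show ?thesis
          using y by (intro pencil_kernel_trivial[of r y 1]) (simp_all add: add.commute)
      next
        case False
        then have "c *v y = ((1 - s) / s * r) *\<^sub>R y + ((1 - s) / s) *\<^sub>R (T *v y)"
          using arg_cong[OF y, of "scaleR (1 / s)"] by (simp add: scaleR_add_right)
        then show ?thesis
          using s by (intro ray[of "(1 - s) / s"]) auto
      qed
    qed
  next
    show "det (- (r *\<^sub>R mat 1 + T)) > 0"
      using assms det_shift_pos[of r] by (simp only: det_uminus_matrix) simp
  qed
  then show ?thesis
    using det_orthogonal_matrix[OF orthogonal_c] by auto
qed

end

section \<open>Matrices conjugating \<open>T\<close> to its inverse\<close>

definition rotation_pair :: "real^'n \<Rightarrow> real^'n \<Rightarrow> real \<Rightarrow> real \<Rightarrow> bool" where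
  "rotation_pair v w \<alpha> \<beta> \<longleftrightarrow> norm v = 1 \<and> norm w = 1 \<and> inner v w = 0
     \<and> T *v v = \<alpha> *\<^sub>R v + \<beta> *\<^sub>R w \<and> T *v w = \<alpha> *\<^sub>R w - \<beta> *\<^sub>R v
     \<and> transpose T *v v = \<alpha> *\<^sub>R v - \<beta> *\<^sub>R w \<and> transpose T *v w = \<alpha> *\<^sub>R w + \<beta> *\<^sub>R v"

lemma rotation_pair_completion:
  assumes vv: "inner v v = 1" and ww: "inner w w = 1" and vw: "inner v w = 0" and "\<beta> \<noteq> 0"
    and Tv: "T *v v = \<alpha> *\<^sub>R v + \<beta> *\<^sub>R w" and Ttv: "transpose T *v v = \<alpha> *\<^sub>R v - \<beta> *\<^sub>R w"
  shows "rotation_pair v w \<alpha> \<beta>"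
proof -
  have "1 = inner (T *v v) (T *v v)"
    using orthogonal_matrix_inner[OF orthogonal_T] vv by simp
  also have "\<dots> = \<alpha> * \<alpha> + \<beta> * \<beta>"
    unfolding Tv by (simp add: inner_add_left inner_add_right vv ww vw inner_commute)
  finally have \<beta>\<beta>: "\<beta> * \<beta> = 1 - \<alpha> * \<alpha>"
    by simp
  have "\<beta> *\<^sub>R (T *v w) = \<alpha> *\<^sub>R (T *v v) - T *v (transpose T *v v)"
    by (simp add: Ttv matrix_vector_mult_diff_distrib matrix_vector_mult_scaleR)
  also have "\<dots> = \<beta> *\<^sub>R (\<alpha> *\<^sub>R w - \<beta> *\<^sub>R v)"
    using orthogonal_T by (simp add: orthogonal_matrix_mult_transpose_vec Tv vec_eq_iff \<beta>\<beta> algebra_simps)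
  finally have Tw: "T *v w = \<alpha> *\<^sub>R w - \<beta> *\<^sub>R v"
    using \<open>\<beta> \<noteq> 0\<close> by simp
  have "\<beta> *\<^sub>R (transpose T *v w) = transpose T *v (T *v v) - \<alpha> *\<^sub>R (transpose T *v v)"
    by (simp add: Tv matrix_vector_right_distrib matrix_vector_mult_scaleR)
  also have "\<dots> = \<beta> *\<^sub>R (\<alpha> *\<^sub>R w + \<beta> *\<^sub>R v)"
    using orthogonal_T by (simp add: orthogonal_matrix_transpose_mult_vec Ttv vec_eq_iff \<beta>\<beta> algebra_simps)
  finally have "transpose T *v w = \<alpha> *\<^sub>R w + \<beta> *\<^sub>R v"
    using \<open>\<beta> \<noteq> 0\<close> by simp
  then show ?thesis
    using assms Tw by (simp add: rotation_pair_def norm_eq_1)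
qed

lemma rotation_pair_through_symmetric_eigenvector:
  assumes nv: "norm v = 1" and v: "T *v v + transpose T *v v = l *\<^sub>R v"
  obtains w \<alpha> \<beta> where "w \<in> span {v, T *v v}" "rotation_pair v w \<alpha> \<beta>"
proof -
  have vv: "inner v v = 1"
    using nv by (simp add: norm_eq_1)
  define \<alpha> where "\<alpha> = inner (T *v v) v"
  define z where "z = T *v v - \<alpha> *\<^sub>R v"
  have "z \<noteq> 0"
  proof
    assume "z = 0"
    then have "v = 0"
      by (intro no_real_eigenvector[of v \<alpha>]) (simp add: z_def)
    then show False
      using nv by simp
  qed
  define \<beta> where "\<beta> = norm z"
  define w where "w = z /\<^sub>R \<beta>"
  have \<beta>: "\<beta> > 0"
    using \<open>z \<noteq> 0\<close> by (simp add: \<beta>_def)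
  have ww: "inner w w = 1"
    using \<beta> by (simp add: w_def \<beta>_def dot_square_norm)
  have Tv: "T *v v = \<alpha> *\<^sub>R v + \<beta> *\<^sub>R w"
    using \<beta> by (simp add: w_def z_def)
  have vw: "inner v w = 0"
    using \<beta> by (simp add: w_def z_def \<alpha>_def inner_diff_right vv inner_commute)
  have "inner (transpose T *v v) v = \<alpha>"
    using inner_matrix_vector_mult_transpose[of "transpose T" v v] by (simp add: \<alpha>_def inner_commute)
  then have "l = 2 * \<alpha>"
    using arg_cong[OF v, of "\<lambda>x. inner x v"] vv by (simp add: \<alpha>_def inner_add_left)
  moreover have "transpose T *v v = l *\<^sub>R v - T *v v"
    using v by (simp add: eq_diff_eq add.commute)
  ultimately have Ttv: "transpose T *v v = \<alpha> *\<^sub>R v - \<beta> *\<^sub>R w"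
    by (simp add: Tv vec_eq_iff algebra_simps)
  have "w \<in> span {v, T *v v}"
    by (simp add: w_def z_def span_diff span_scale span_base)
  moreover have "rotation_pair v w \<alpha> \<beta>"
    using \<beta> by (intro rotation_pair_completion[OF vv ww vw _ Tv Ttv]) simp
  ultimately show thesis
    using that by blast
qed

definition reducing :: "(real^'n) set \<Rightarrow> bool" where
  "reducing U \<longleftrightarrow> subspace U \<and> (\<forall>x\<in>U. T *v x \<in> U \<and> transpose T *v x \<in> U)"

lemma rotation_pair_in_reducing_subspace:
  assumes U: "reducing U" and nontrivial: "u \<in> U" "u \<noteq> 0"
  obtains v w \<alpha> \<beta> where "v \<in> U" "w \<in> U" "rotation_pair v w \<alpha> \<beta>"
proof -
  have subspace: "subspace U" and invariant: "\<And>x. x \<in> U \<Longrightarrow> T *v x \<in> U \<and> transpose T *v x \<in> U"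
    using U by (auto simp: reducing_def)
  obtain v l where vU: "v \<in> U" and nv: "norm v = 1" and v: "T *v v + transpose T *v v = l *\<^sub>R v"
  proof (rule self_adjoint_eigenvector_in_invariant_subspace[OF _ _ subspace _ nontrivial])
    show "linear (\<lambda>x. T *v x + transpose T *v x)"
      by (simp add: linear_iff algebra_simps)
    show "inner (T *v x + transpose T *v x) y = inner x (T *v y + transpose T *v y)" for x y
      by (simp add: inner_add_left inner_add_right inner_matrix_vector_mult_transpose add.commute)
    show "T *v x + transpose T *v x \<in> U" if "x \<in> U" for x
      using invariant[OF that] subspace by (simp add: subspace_add)
  qed
  obtain w \<alpha> \<beta> where w: "w \<in> span {v, T *v v}" and rot: "rotation_pair v w \<alpha> \<beta>"
    using rotation_pair_through_symmetric_eigenvector[OF nv v] .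
  have "span {v, T *v v} \<subseteq> U"
    using vU invariant[OF vU] subspace by (simp add: span_minimal)
  then show thesis
    using that vU w rot by blast
qed

definition reverses :: "(real^'n) set \<Rightarrow> real^'n^'n \<Rightarrow> bool" where
  "reverses U h \<longleftrightarrow> orthogonal_matrix h
     \<and> (\<forall>x\<in>U. h *v x \<in> U \<and> h *v (T *v x) = transpose T *v (h *v x))
     \<and> (\<forall>x. (\<forall>u\<in>U. orthogonal u x) \<longrightarrow> h *v x = x)"

lemma reducing_orthogonal_complement:
  assumes U: "reducing U" and P: "reducing P" "P \<subseteq> U"
  shows "reducing {y \<in> U. \<forall>p\<in>P. orthogonal p y}"
    and "dim {y \<in> U. \<forall>p\<in>P. orthogonal p y} + dim P = dim U"
proof -
  have "\<And>p. p \<in> P \<Longrightarrow> T *v p \<in> P \<and> transpose T *v p \<in> P"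
    using P(1) by (simp add: reducing_def)
  then have "\<forall>p\<in>P. orthogonal p (T *v y) \<and> orthogonal p (transpose T *v y)"
    if "\<forall>p\<in>P. orthogonal p y" for y
    using orthogonal_complement_transpose_invariant[of P T y]
      orthogonal_complement_transpose_invariant[of P "transpose T" y] that
    by simp
  moreover have "subspace {y \<in> U. \<forall>p\<in>P. orthogonal p y}"
    using U unfolding reducing_def subspace_def by (simp add: orthogonal_clauses)
  ultimately show "reducing {y \<in> U. \<forall>p\<in>P. orthogonal p y}"
    using U unfolding reducing_def by simp
  show "dim {y \<in> U. \<forall>p\<in>P. orthogonal p y} + dim P = dim U"
    using U P by (intro dim_subspace_orthogonal_to_vectors) (auto simp: reducing_def)
qed

lemma reducing_plane_complement:
  assumes U: "reducing U" and "v \<in> U" "w \<in> U" and rot: "rotation_pair v w \<alpha> \<beta>"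
  shows "reducing {y \<in> U. \<forall>p\<in>span {v, w}. orthogonal p y}"
    and "dim {y \<in> U. \<forall>p\<in>span {v, w}. orthogonal p y} + 2 = dim U"
proof -
  have "a *\<^sub>R x + b *\<^sub>R y \<in> span {v, w}" "a *\<^sub>R x - b *\<^sub>R y \<in> span {v, w}"
    if "x \<in> {v, w}" "y \<in> {v, w}" for a b x y
    using that by (simp_all add: span_add span_diff span_scale span_base)
  then have "T *v s \<in> span {v, w} \<and> transpose T *v s \<in> span {v, w}" if "s \<in> {v, w}" for s
    using that rot by (auto simp: rotation_pair_def)
  then have "T *v p \<in> span {v, w} \<and> transpose T *v p \<in> span {v, w}" if "p \<in> span {v, w}" for p
    using span_invariant[of "{v, w}" T p] span_invariant[of "{v, w}" "transpose T" p] that by blast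
  then have plane: "reducing (span {v, w})"
    by (simp add: reducing_def)
  have "pairwise orthogonal {v, w}"
    using rot by (simp add: rotation_pair_def pairwise_insert orthogonal_def inner_commute[of w v])
  moreover have "0 \<notin> {v, w}" "v \<noteq> w"
    using rot by (auto simp: rotation_pair_def)
  ultimately have "dim (span {v, w}) = 2"
    using pairwise_orthogonal_independent[of "{v, w}"] by (simp add: dim_eq_card_independent)
  moreover have "span {v, w} \<subseteq> U"
    using U assms(2,3) by (simp add: reducing_def span_minimal)
  ultimately show "reducing {y \<in> U. \<forall>p\<in>span {v, w}. orthogonal p y}"
    and "dim {y \<in> U. \<forall>p\<in>span {v, w}. orthogonal p y} + 2 = dim U"
    using reducing_orthogonal_complement[OF U plane] by simp_all
qed

context
  fixes U U' :: "(real^'n) set" and v w :: "real^'n" and \<alpha> \<beta> :: real and h' :: "real^'n^'n"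
  assumes U: "subspace U" and vU: "v \<in> U" and wU: "w \<in> U" and rot: "rotation_pair v w \<alpha> \<beta>"
    and U': "U' = {y \<in> U. \<forall>p\<in>span {v, w}. orthogonal p y}" "reducing U'"
    and h': "reverses U' h'"
begin

lemma householder_extension_apply:
  shows "(householder w ** h') *v v = v" and "(householder w ** h') *v w = - w"
    and "\<forall>u\<in>U'. (householder w ** h') *v u = h' *v u"
proof -
  have h_apply: "(householder w ** h') *v x = h' *v x - (2 * inner w (h' *v x)) *\<^sub>R w" for x
    by (simp add: matrix_vector_mul_assoc[symmetric] householder_apply)
  have perp: "orthogonal u v" "orthogonal u w" if "u \<in> U'" for u
    using that unfolding U' by (auto simp: orthogonal_commute span_base)
  have "h' *v x = x" if "\<forall>u\<in>U'. orthogonal u x" for x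
    using h' that by (simp add: reverses_def)
  then have "h' *v v = v" "h' *v w = w"
    using perp by blast+
  then show "(householder w ** h') *v v = v" and "(householder w ** h') *v w = - w"
    using rot by (simp_all add: h_apply rotation_pair_def norm_eq_1 inner_commute[of w v] scaleR_2)
  show "\<forall>u\<in>U'. (householder w ** h') *v u = h' *v u"
    using h' perp(2) by (simp add: h_apply reverses_def orthogonal_def inner_commute[of w])
qed

lemma householder_extension_decompose:
  assumes "x \<in> U"
  obtains a b u where "x = a *\<^sub>R v + b *\<^sub>R w + u" "u \<in> U'"
proof -
  have "inner v v = 1" "inner w w = 1" "inner v w = 0"
    using rot by (simp_all add: rotation_pair_def norm_eq_1)
  from orthonormal_pair_decomposition[OF U vU wU this assms]
  obtain a b u where "x = a *\<^sub>R v + b *\<^sub>R w + u" "u \<in> U" "\<forall>p\<in>span {v, w}. orthogonal p u"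
    by blast
  then show thesis
    using that unfolding U'(1) by blast
qed

lemma householder_extension_commute:
  assumes "x \<in> U"
  shows "(householder w ** h') *v (T *v x) = transpose T *v ((householder w ** h') *v x)"
proof -
  let ?h = "householder w ** h'"
  note hv = householder_extension_apply(1) and hw = householder_extension_apply(2)
    and hu = householder_extension_apply(3)[rule_format]
  obtain a b u where x: "x = a *\<^sub>R v + b *\<^sub>R w + u" and u: "u \<in> U'"
    using householder_extension_decompose[OF assms] .
  have "?h *v (T *v v) = transpose T *v (?h *v v)"
    using rot by (simp add: rotation_pair_def hv hw matrix_vector_right_distrib
        matrix_vector_mult_diff_distrib matrix_vector_mult_scaleR matrix_vector_mult_uminus)
  moreover have "?h *v (T *v w) = transpose T *v (?h *v w)"
    using rot by (simp add: rotation_pair_def hv hw matrix_vector_right_distrib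
        matrix_vector_mult_diff_distrib matrix_vector_mult_scaleR matrix_vector_mult_uminus)
  moreover have "T *v u \<in> U'"
    using u U'(2) by (simp add: reducing_def)
  then have "?h *v (T *v u) = transpose T *v (?h *v u)"
    using u h' by (simp add: hu reverses_def)
  ultimately show ?thesis
    unfolding x by (simp only: matrix_vector_right_distrib matrix_vector_mult_scaleR)
qed

lemma householder_extension_preserves:
  assumes "x \<in> U"
  shows "(householder w ** h') *v x \<in> U"
proof -
  obtain a b u where x: "x = a *\<^sub>R v + b *\<^sub>R w + u" and u: "u \<in> U'"
    using householder_extension_decompose[OF assms] .
  have "(householder w ** h') *v x = a *\<^sub>R v - b *\<^sub>R w + h' *v u"
    unfolding x using u householder_extension_apply
    by (simp add: matrix_vector_right_distrib matrix_vector_mult_scaleR)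
  moreover have "h' *v u \<in> U"
    using h' u unfolding U'(1) by (simp add: reverses_def)
  ultimately show ?thesis
    using U vU wU by (simp add: subspace_add subspace_diff subspace_scale)
qed

lemma reverses_householder_extension: "reverses U (householder w ** h')"
proof -
  have "(householder w ** h') *v x = x" if "\<forall>u\<in>U. orthogonal u x" for x
  proof -
    have "h' *v x = x"
      using h' that by (simp add: reverses_def U')
    moreover have "inner w x = 0"
      using that wU by (simp add: orthogonal_def)
    ultimately show ?thesis
      by (simp add: matrix_vector_mul_assoc[symmetric] householder_apply)
  qed
  moreover have "orthogonal_matrix (householder w ** h')"
    using h' rot by (intro orthogonal_matrix_mul orthogonal_matrix_householder)
      (simp_all add: reverses_def rotation_pair_def)
  ultimately show ?thesis
    using householder_extension_commute householder_extension_preserves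
    unfolding reverses_def by blast
qed

end

lemma reverser_exists:
  assumes "reducing U" and "dim U = 2 * k"
  shows "\<exists>h. reverses U h \<and> det h = (-1) ^ k"
  using assms
proof (induction k arbitrary: U)
  case 0
  then have "U \<subseteq> {0}"
    by (simp add: dim_eq_0)
  then have "reverses U (mat 1)"
    by (auto simp: reverses_def orthogonal_matrix_id)
  then show ?case
    by auto
next
  case (Suc k)
  obtain u where "u \<in> U" "u \<noteq> 0"
    using Suc.prems(2) dim_eq_0[of U] by auto
  then obtain v w \<alpha> \<beta> where vU: "v \<in> U" and wU: "w \<in> U" and rot: "rotation_pair v w \<alpha> \<beta>"
    using rotation_pair_in_reducing_subspace[OF Suc.prems(1)] by blast
  define U' where "U' = {y \<in> U. \<forall>p\<in>span {v, w}. orthogonal p y}"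
  have U': "reducing U'" "dim U' = 2 * k"
    using reducing_plane_complement[OF Suc.prems(1) vU wU rot] Suc.prems(2) by (simp_all add: U'_def)
  then obtain h' where h': "reverses U' h'" and det_h': "det h' = (-1) ^ k"
    using Suc.IH by blast
  have "subspace U"
    using Suc.prems(1) by (simp add: reducing_def)
  then have "reverses U (householder w ** h')"
    using vU wU rot U'_def U'(1) h' by (rule reverses_householder_extension)
  moreover have "det (householder w ** h') = (-1) ^ Suc k"
    using rot by (simp add: det_mul det_householder det_h' rotation_pair_def)
  ultimately show ?case
    by blast
qed

lemma reverser_exists_even:
  assumes "even CARD('n)"
  obtains h where "orthogonal_matrix h" "h ** T = transpose T ** h" "det h = (-1) ^ (CARD('n) div 2)"
proof -
  have "reducing UNIV"
    by (simp add: reducing_def)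
  moreover have "dim (UNIV :: (real^'n) set) = 2 * (CARD('n) div 2)"
    using assms by simp
  ultimately obtain h where h: "reverses UNIV h" "det h = (-1) ^ (CARD('n) div 2)"
    using reverser_exists by blast
  moreover have "h ** T = transpose T ** h"
    using h(1) by (simp add: reverses_def matrix_eq matrix_vector_mul_assoc[symmetric])
  ultimately show thesis
    using that by (auto simp: reverses_def)
qed

lemma det_reverser_unique:
  assumes even: "even CARD('n)"
    and h: "orthogonal_matrix h" "h ** T = transpose T ** h"
    and g: "orthogonal_matrix g" "g ** T = transpose T ** g"
  shows "det h = det g"
proof -
  have gg: "transpose g ** g = mat 1" "g ** transpose g = mat 1"
    using g(1) by (simp_all add: orthogonal_matrix_def)
  have "transpose g ** transpose T = transpose g ** transpose T ** (g ** transpose g)"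
    by (simp add: gg)
  also have "\<dots> = transpose g ** (g ** T) ** transpose g"
    by (simp add: g(2) matrix_mul_assoc)
  also have "\<dots> = T ** transpose g"
    by (simp add: gg matrix_mul_assoc)
  finally have gT: "transpose g ** transpose T = T ** transpose g" .
  have "transpose g ** h ** T = transpose g ** (transpose T ** h)"
    by (simp add: h(2) flip: matrix_mul_assoc)
  also have "\<dots> = T ** (transpose g ** h)"
    by (simp add: gT matrix_mul_assoc)
  finally have "det (transpose g ** h) = 1"
    using g(1) h(1) even by (intro det_commuting_orthogonal) (simp_all add: orthogonal_matrix_mul)
  moreover have "det g = 1 \<or> det g = -1"
    using det_orthogonal_matrix[OF g(1)] .
  ultimately show ?thesis
    by (auto simp: det_mul)
qed

end

theorem proposition3p4:
  fixes T :: "real^'n^'n"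
  assumes "T \<in> SO"
    and "\<not> mat_eigenvalue T 1"
    and "\<not> mat_eigenvalue T (-1)"
  shows "real_in SO T \<longleftrightarrow> CARD('n) mod 4 \<noteq> 2"
proof -
  have T: "orthogonal_matrix T" "det T = 1"
    using assms(1) by (simp_all add: SO_def)
  interpret orthogonal_without_real_eigenvalues T
  proof
    show "v = 0" if "T *v v = a *\<^sub>R v" for v a
      using orthogonal_matrix_real_eigenvalue[OF T(1) that] assms(2,3) that
      unfolding mat_eigenvalue_def by (metis scaleR_minus1_left scaleR_one)
  qed (rule T(1))
  have even: "even CARD('n)"
    using SO_odd_dim_fixed_vector[OF T] assms(2) unfolding mat_eigenvalue_def by (metis scaleR_one)
  obtain h where h: "orthogonal_matrix h" "h ** T = transpose T ** h"
    and det_h: "det h = (-1) ^ (CARD('n) div 2)"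
    using reverser_exists_even[OF even] by blast
  have "real_in SO T \<longleftrightarrow> det h = 1"
    using real_in_SO_iff[OF T(1)] det_reverser_unique[OF even _ _ h] h by metis
  also have "\<dots> \<longleftrightarrow> even (CARD('n) div 2)"
    by (cases "even (CARD('n) div 2)") (simp_all add: det_h)
  also have "\<dots> \<longleftrightarrow> CARD('n) mod 4 \<noteq> 2"
    using even by presburger
  finally show ?thesis .
qed

end
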